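(* Let $f\in C^0_b(\mathbb{R})$. There exists a positive constant $K=K(\|f\|_{L^\infty},d)$ such that every classical solution $(u,m)$ of the MFG system satisfies $\|u\|_{L^\infty}\le \|f\|_{L^\infty}/\lambda$, $\|Du\|_{L^\infty}\le K$, and $\|\Delta u\|_{L^\infty}\le 2\|f\|_{L^\infty}+K^2/2=:M$. Furthermore, if $\lambda>M$, then $\|m\|_{L^\infty}\le \frac{\lambda}{\lambda-M}\|m_0\|_{L^\infty}$.
   Context: $\mathbb{T}^d$ is the flat torus, $\lambda>0$, $\alpha\in(0,1)$, $m_0\in C^{0,\alpha}(\mathbb{T}^d)$ a probability density. $C^0_b(\mathbb{R})$ denotes bounded continuous functions. The MFG system is $-\Delta u + \tfrac12|Du|^2 + \lambda u = f(m)$, $-\Delta m - \operatorname{div}(m Du) + \lambda m = \lambda m_0$ in $\mathbb{T}^d$; a classical solution is a pair of $C^2$ functions satisfying it pointwise. *)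

theory Defs
  imports "HOL-Analysis.Analysis"
begin

text \<open>Functions on the flat torus T^d = R^d / Z^d are represented as Z^d-periodic
  functions on real^'d.\<close>

definition periodic :: "(real^'d \<Rightarrow> real) \<Rightarrow> bool" where
  "periodic u \<longleftrightarrow> (\<forall>x i. u (x + axis i 1) = u x)"

definition pd :: "'d \<Rightarrow> (real^'d \<Rightarrow> real) \<Rightarrow> real^'d \<Rightarrow> real" where
  "pd i u x = deriv (\<lambda>t. u (x + t *\<^sub>R axis i 1)) 0"

definition grad :: "(real^'d \<Rightarrow> real) \<Rightarrow> real^'d \<Rightarrow> real^'d" where
  "grad u x = (\<chi> i. pd i u x)"

definition laplacian :: "(real^'d \<Rightarrow> real) \<Rightarrow> real^'d \<Rightarrow> real" where
  "laplacian u x = (\<Sum>i\<in>UNIV. pd i (pd i u) x)"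

definition div_mgrad :: "(real^'d \<Rightarrow> real) \<Rightarrow> (real^'d \<Rightarrow> real) \<Rightarrow> real^'d \<Rightarrow> real" where
  "div_mgrad m u x = (\<Sum>i\<in>UNIV. pd i (\<lambda>y. m y * pd i u y) x)"

definition C2 :: "(real^'d \<Rightarrow> real) \<Rightarrow> bool" where
  "C2 u \<longleftrightarrow> (\<forall>x. u differentiable (at x)) \<and>
     (\<forall>i x. pd i u differentiable (at x)) \<and>
     (\<forall>i j. continuous_on UNIV (pd j (pd i u)))"

definition supnorm :: "('a \<Rightarrow> real) \<Rightarrow> real" where
  "supnorm u = (SUP x. \<bar>u x\<bar>)"

definition supnorm_vec :: "('a \<Rightarrow> real^'d) \<Rightarrow> real" where
  "supnorm_vec v = (SUP x. norm (v x))"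

definition holder :: "real \<Rightarrow> (real^'d \<Rightarrow> real) \<Rightarrow> bool" where
  "holder \<alpha> g \<longleftrightarrow> (\<exists>C. \<forall>x y. \<bar>g x - g y\<bar> \<le> C * dist x y powr \<alpha>)"

definition prob_density :: "(real^'d \<Rightarrow> real) \<Rightarrow> bool" where
  "prob_density g \<longleftrightarrow> (\<forall>x. g x \<ge> 0) \<and> (g has_integral 1) (cbox 0 One)"

definition MFG_classical_solution ::
  "real \<Rightarrow> (real \<Rightarrow> real) \<Rightarrow> (real^'d \<Rightarrow> real) \<Rightarrow> (real^'d \<Rightarrow> real) \<Rightarrow> (real^'d \<Rightarrow> real) \<Rightarrow> bool" where
  "MFG_classical_solution lam f m0 u m \<longleftrightarrow>
     periodic u \<and> periodic m \<and> C2 u \<and> C2 m \<and>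
     (\<forall>x. - laplacian u x + (1/2) * (norm (grad u x))\<^sup>2 + lam * u x = f (m x)) \<and>
     (\<forall>x. - laplacian m x - div_mgrad m u x + lam * m x = lam * m0 x)"

end

theory Submission
  imports Defs
begin

(* At a maximum or minimum of u the equation reduces to lam u = f(m) up to a sign-definite
   Laplacian, so |u| <= |f|/lam. For the gradient, maximise u x - u (x - w) - L phi(|w|) over
   x and |w| <= R = sqrt d, where phi(t) = t - t^2/(4R); periodicity lets the maximum be taken
   with |w| <= R/2. At a positive maximum the gradients at x and y = x - w agree, and moving x
   along e_k while y moves along the reflection of e_k in the hyperplane orthogonal to w gives,
   after summing over k, Delta u(x) - Delta u(y) <= -2L/R. Subtracting the equations at x and y
   bounds the same difference below by -2|f|, which is impossible for L > |f| R. So u grows at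
   most like L phi(|w|) <= L |w|, hence |Du| <= L, and the equation bounds Delta u by M.
   Finally div(m Du) = Dm.Du + m Delta u, so at an extremum of m the second equation gives
   (lam - M) |m| <= lam |m0|. *)

section \<open>Directional derivatives and extrema\<close>

lemma has_real_derivative_along_line:
  fixes u :: "real^'d \<Rightarrow> real"
  assumes "u differentiable (at (x + s *\<^sub>R a))"
  shows "((\<lambda>t. u (x + t *\<^sub>R a)) has_real_derivative (\<Sum>i\<in>UNIV. a$i * pd i u (x + s *\<^sub>R a))) (at s)"
proof -
  have line_deriv: "((\<lambda>t. u (y + t *\<^sub>R b)) has_real_derivative D b) (at c)"
    if "(u has_derivative D) (at (y + c *\<^sub>R b))" for y b c D
  proof -
    have "((\<lambda>t. y + t *\<^sub>R b) has_derivative (\<lambda>h. h *\<^sub>R b)) (at c)"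
      by (auto intro!: derivative_eq_intros)
    from has_derivative_compose[OF this that]
    have "((\<lambda>t. u (y + t *\<^sub>R b)) has_derivative (\<lambda>h. h * D b)) (at c)"
      using linear_scale[OF has_derivative_linear[OF that]] by (simp add: o_def)
    then show ?thesis
      unfolding has_field_derivative_def by (rule has_derivative_eq_rhs) (simp add: fun_eq_iff)
  qed
  let ?y = "x + s *\<^sub>R a"
  let ?D = "frechet_derivative u (at ?y)"
  have D: "(u has_derivative ?D) (at ?y)"
    using assms frechet_derivative_works by blast
  have pd_eq: "pd i u ?y = ?D (axis i 1)" for i
    unfolding pd_def using line_deriv[where y="?y" and b="axis i 1" and c=0] D by (simp add: DERIV_imp_deriv)
  have "?D a = ?D (\<Sum>i\<in>UNIV. a$i *\<^sub>R axis i 1)"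
    using basis_expansion[of a] by (simp add: scalar_mult_eq_scaleR)
  also have "\<dots> = (\<Sum>i\<in>UNIV. a$i * pd i u ?y)"
    using has_derivative_linear[OF D] by (simp add: linear_sum linear_scale pd_eq)
  finally show ?thesis
    using line_deriv[OF D] by simp
qed

lemma sum_axis_mult: "(\<Sum>i\<in>UNIV. axis k (1::real) $ i * g i) = g k"
  by (simp add: axis_def if_distrib[of "\<lambda>c. c * _"] cong: if_cong)

lemma has_real_derivative_along_axis:
  fixes u :: "real^'d \<Rightarrow> real"
  assumes "u differentiable (at (x + s *\<^sub>R axis k 1))"
  shows "((\<lambda>t. u (x + t *\<^sub>R axis k 1)) has_real_derivative pd k u (x + s *\<^sub>R axis k 1)) (at s)"
  using has_real_derivative_along_line[OF assms] by (simp add: sum_axis_mult)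

definition hessian_form :: "(real^'d \<Rightarrow> real) \<Rightarrow> real^'d \<Rightarrow> real^'d \<Rightarrow> real" where
  "hessian_form u x a = (\<Sum>i\<in>UNIV. a$i * (\<Sum>j\<in>UNIV. a$j * pd j (pd i u) x))"

lemma has_real_derivative_directional_pd:
  fixes u :: "real^'d \<Rightarrow> real"
  assumes "\<And>i. pd i u differentiable (at x)"
  shows "((\<lambda>s. \<Sum>i\<in>UNIV. a$i * pd i u (x + s *\<^sub>R a)) has_real_derivative hessian_form u x a) (at 0)"
  unfolding hessian_form_def
  using has_real_derivative_along_line[of "pd _ u" x 0 a] assms
  by (auto intro!: DERIV_sum DERIV_cmult)

lemma has_real_derivative_pd_along_axis:
  fixes u :: "real^'d \<Rightarrow> real"
  assumes "pd k u differentiable (at x)"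
  shows "((\<lambda>s. pd k u (x + s *\<^sub>R axis k 1)) has_real_derivative pd k (pd k u) x) (at 0)"
  using has_real_derivative_along_axis[of "pd k u" x 0 k] assms by simp

lemma sum_component_square: "(\<Sum>k\<in>UNIV. (e$k)\<^sup>2) = (norm e)\<^sup>2"
  unfolding power2_norm_eq_inner inner_vec_def by (simp add: power2_eq_square)

lemma local_max_second_derivative_test:
  fixes h :: "real \<Rightarrow> real"
  assumes h: "\<And>s. (h has_real_derivative h' s) (at s)"
    and h': "(h' has_real_derivative c) (at 0)"
    and "\<delta> > 0" and max: "\<And>s. \<bar>s\<bar> < \<delta> \<Longrightarrow> h s \<le> h 0"
  shows "h' 0 = 0 \<and> c \<le> 0"
proof
  show crit: "h' 0 = 0"
    using DERIV_local_max[OF h \<open>\<delta> > 0\<close>] max by auto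
  show "c \<le> 0"
  proof (rule ccontr)
    assume "\<not> c \<le> 0"
    then obtain e where "e > 0" and h'_pos: "\<And>t. 0 < t \<Longrightarrow> t < e \<Longrightarrow> h' 0 < h' t"
      using DERIV_pos_inc_right[OF h'] by force
    define t where "t = min (e/2) (\<delta>/2)"
    have t: "0 < t" "t < e" "t < \<delta>"
      using \<open>e > 0\<close> \<open>\<delta> > 0\<close> by (auto simp: t_def)
    obtain z where z: "0 < z" "z < t" "h t - h 0 = t * h' z"
      using MVT2[OF t(1), of h h'] h by auto
    have "0 < h' z"
      using h'_pos[of z] z t crit by simp
    then have "h 0 < h t"
      using mult_pos_pos[OF t(1)] z(3) by fastforce
    then show False
      using max[of t] t by simp
  qed
qed

lemma C2_continuous_on: "C2 u \<Longrightarrow> continuous_on UNIV u"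
  unfolding C2_def
  by (meson continuous_at_imp_continuous_on differentiable_imp_continuous_within)

lemma C2_global_max:
  fixes u :: "real^'d \<Rightarrow> real"
  assumes "C2 u" and "\<And>y. u y \<le> u x0"
  shows "grad u x0 = 0 \<and> laplacian u x0 \<le> 0"
proof -
  have "(\<lambda>s. pd k u (x0 + s *\<^sub>R axis k 1)) 0 = 0 \<and> pd k (pd k u) x0 \<le> 0" for k
    by (rule local_max_second_derivative_test[where h="\<lambda>s. u (x0 + s *\<^sub>R axis k 1)" and \<delta>=1])
       (use assms in \<open>auto simp: C2_def
          intro: has_real_derivative_along_axis has_real_derivative_pd_along_axis\<close>)
  then show ?thesis
    by (simp add: grad_def vec_eq_iff laplacian_def sum_nonpos)
qed

lemma C2_global_min:
  fixes u :: "real^'d \<Rightarrow> real"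
  assumes "C2 u" and "\<And>y. u x0 \<le> u y"
  shows "grad u x0 = 0 \<and> laplacian u x0 \<ge> 0"
proof -
  have "(\<lambda>s. - pd k u (x0 + s *\<^sub>R axis k 1)) 0 = 0 \<and> - pd k (pd k u) x0 \<le> 0" for k
    by (rule local_max_second_derivative_test[where h="\<lambda>s. - u (x0 + s *\<^sub>R axis k 1)" and \<delta>=1])
       (use assms in \<open>auto simp: C2_def intro!: derivative_intros
          has_real_derivative_along_axis has_real_derivative_pd_along_axis\<close>)
  then show ?thesis
    by (simp add: grad_def vec_eq_iff laplacian_def sum_nonneg)
qed

section \<open>Periodic functions\<close>

lemma periodic_add_Ints_vec:
  fixes u :: "real^'d \<Rightarrow> real"
  assumes "periodic u" and "\<forall>i. v$i \<in> \<int>"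
  shows "u (x + v) = u x"
proof -
  have axis_shift: "u (y + of_int n *\<^sub>R axis i 1) = u y" for y i n
  proof (induction n rule: int_induct[where k=0])
    case (step1 k)
    have "u (y + of_int (k + 1) *\<^sub>R axis i 1) = u ((y + of_int k *\<^sub>R axis i 1) + axis i 1)"
      by (simp add: algebra_simps)
    with step1 \<open>periodic u\<close> show ?case
      unfolding periodic_def by simp
  next
    case (step2 k)
    have "u (y + of_int k *\<^sub>R axis i 1) = u ((y + of_int (k - 1) *\<^sub>R axis i 1) + axis i 1)"
      by (simp add: algebra_simps)
    with step2 \<open>periodic u\<close> show ?case
      unfolding periodic_def by simp
  qed simp
  have "u (y + (\<Sum>i\<in>I. v$i *\<^sub>R axis i 1)) = u y" if "finite I" for y I
    using that
  proof (induction I arbitrary: y rule: finite_induct)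
    case (insert j I)
    obtain n where "v$j = of_int n"
      using assms(2) Ints_cases by metis
    with insert have "u (y + (\<Sum>i\<in>insert j I. v$i *\<^sub>R axis i 1))
        = u ((y + of_int n *\<^sub>R axis j 1) + (\<Sum>i\<in>I. v$i *\<^sub>R axis i 1))"
      by (simp add: algebra_simps)
    with insert.IH axis_shift show ?case
      by simp
  qed simp
  from this[of UNIV x] show ?thesis
    using basis_expansion[of v] by (simp add: scalar_mult_eq_scaleR)
qed

lemma exists_Ints_vec_shift_unit_cube:
  fixes x :: "real^'d"
  shows "\<exists>v. (\<forall>i. v$i \<in> \<int>) \<and> x + v \<in> cbox 0 (\<chi> i. 1)"
proof (intro exI conjI)
  show "x + (\<chi> i. - of_int \<lfloor>x$i\<rfloor>) \<in> cbox 0 (\<chi> i. 1)"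
    unfolding mem_box_cart by (auto simp: of_int_floor_le) linarith
qed auto

lemma exists_Ints_vec_shift_norm_le:
  fixes w :: "real^'d"
  shows "\<exists>v. (\<forall>i. v$i \<in> \<int>) \<and> norm (w + v) \<le> sqrt CARD('d) / 2"
proof (intro exI conjI)
  let ?v = "\<chi> i. - of_int \<lfloor>w$i + 1/2\<rfloor> :: real^'d"
  have "\<bar>(w + ?v)$i\<bar> \<le> \<bar>(\<chi> i. 1/2 :: real^'d)$i\<bar>" for i
  proof -
    have "of_int \<lfloor>w$i + 1/2\<rfloor> \<le> w$i + 1/2" "w$i + 1/2 < of_int \<lfloor>w$i + 1/2\<rfloor> + 1"
      by (rule of_int_floor_le, rule real_of_int_floor_add_one_gt)
    then show ?thesis
      by (simp only: vector_add_component vec_lambda_beta abs_le_iff) linarith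
  qed
  then have "norm (w + ?v) \<le> norm (\<chi> i. 1/2 :: real^'d)"
    by (metis norm_le_componentwise_cart real_norm_def)
  also have "\<dots> = sqrt CARD('d) / 2"
    by (simp add: norm_eq_sqrt_inner inner_vec_def real_sqrt_divide)
  finally show "norm (w + ?v) \<le> sqrt CARD('d) / 2" .
qed auto

lemma periodic_range:
  fixes u :: "real^'d \<Rightarrow> real"
  assumes "periodic u"
  shows "range u = u ` cbox 0 (\<chi> i. 1)"
proof -
  have "u x \<in> u ` cbox 0 (\<chi> i. 1)" for x
  proof -
    obtain v where "\<forall>i. v$i \<in> \<int>" and "x + v \<in> cbox 0 (\<chi> i. 1)"
      using exists_Ints_vec_shift_unit_cube by blast
    then show ?thesis
      using periodic_add_Ints_vec[OF assms] by (metis image_eqI)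
  qed
  then show ?thesis
    by blast
qed

lemma periodic_continuous_attains_max:
  fixes u :: "real^'d \<Rightarrow> real"
  assumes "periodic u" and "continuous_on UNIV u"
  shows "\<exists>x0. \<forall>x. u x \<le> u x0"
proof -
  have "0 \<in> cbox 0 (\<chi> i. 1 :: real^'d)"
    by (simp add: mem_box_cart)
  then obtain x0 where "\<forall>y\<in>cbox 0 (\<chi> i. 1). u y \<le> u x0"
    using continuous_attains_sup[OF compact_cbox _ continuous_on_subset[OF assms(2) subset_UNIV]]
    by blast
  with periodic_range[OF assms(1)] show ?thesis
    by (metis image_iff rangeI)
qed

lemma periodic_continuous_attains_min:
  fixes u :: "real^'d \<Rightarrow> real"
  assumes "periodic u" and "continuous_on UNIV u"
  shows "\<exists>x0. \<forall>x. u x0 \<le> u x"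
proof -
  have "0 \<in> cbox 0 (\<chi> i. 1 :: real^'d)"
    by (simp add: mem_box_cart)
  then obtain x0 where "\<forall>y\<in>cbox 0 (\<chi> i. 1). u x0 \<le> u y"
    using continuous_attains_inf[OF compact_cbox _ continuous_on_subset[OF assms(2) subset_UNIV]]
    by blast
  with periodic_range[OF assms(1)] show ?thesis
    by (metis image_iff rangeI)
qed

lemma holder_bounded_image:
  assumes "holder \<alpha> g" and "\<alpha> \<ge> 0" and "bounded S"
  shows "bounded (g ` S)"
proof -
  obtain C where C: "\<And>x y. \<bar>g x - g y\<bar> \<le> C * dist x y powr \<alpha>"
    using assms(1) unfolding holder_def by blast
  obtain B where B: "\<And>x. x \<in> S \<Longrightarrow> dist x 0 \<le> B"
    using assms(3) bounded_iff by (metis dist_0_norm dist_commute)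
  have "\<bar>g x\<bar> \<le> \<bar>g 0\<bar> + \<bar>C\<bar> * B powr \<alpha>" if "x \<in> S" for x
  proof -
    have "\<bar>g x - g 0\<bar> \<le> \<bar>C\<bar> * dist x 0 powr \<alpha>"
      using C[of x 0] mult_right_mono[OF abs_ge_self powr_ge_zero] by (rule order_trans)
    also have "\<dots> \<le> \<bar>C\<bar> * B powr \<alpha>"
      using B[OF that] assms(2) by (intro mult_left_mono powr_mono2) auto
    finally show ?thesis
      by linarith
  qed
  then show ?thesis
    unfolding bounded_iff by auto
qed

section \<open>The Hamilton-Jacobi equation\<close>

lemma HJ_solution_abs_le:
  fixes u :: "real^'d \<Rightarrow> real"
  assumes "C2 u" and "periodic u"
    and eq: "\<And>x. - laplacian u x + (1/2) * (norm (grad u x))\<^sup>2 + lam * u x = F x"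
    and F: "\<And>x. \<bar>F x\<bar> \<le> S" and "lam > 0"
  shows "\<bar>u x\<bar> \<le> S / lam"
proof -
  obtain a where a: "\<And>y. u y \<le> u a"
    using periodic_continuous_attains_max[OF \<open>periodic u\<close> C2_continuous_on[OF \<open>C2 u\<close>]] by blast
  obtain b where b: "\<And>y. u b \<le> u y"
    using periodic_continuous_attains_min[OF \<open>periodic u\<close> C2_continuous_on[OF \<open>C2 u\<close>]] by blast
  have "lam * u a \<le> S"
    using eq[of a] C2_global_max[OF \<open>C2 u\<close> a] F[of a] by auto
  moreover have "- S \<le> lam * u b"
    using eq[of b] C2_global_min[OF \<open>C2 u\<close> b] F[of b] by auto
  ultimately have "u a \<le> S / lam" and "- S / lam \<le> u b"
    using \<open>lam > 0\<close> by (simp_all add: field_simps)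
  then show ?thesis
    using a[of x] b[of x] by (simp add: abs_le_iff)
qed

lemma one_le_sqrt_card: "1 \<le> sqrt CARD('a::finite)"
  using zero_less_card_finite[where 'a='a] by simp

definition concave_gauge :: "real \<Rightarrow> real \<Rightarrow> real" where
  "concave_gauge R t = t - t\<^sup>2 / (4 * R)"

lemma concave_gauge_mono:
  assumes "R > 0" and "0 \<le> s" and "s \<le> t" and "t \<le> 2 * R"
  shows "concave_gauge R s \<le> concave_gauge R t"
proof -
  have "concave_gauge R t - concave_gauge R s = (t - s) * (1 - (s + t) / (4 * R))"
    using \<open>R > 0\<close> by (simp add: concave_gauge_def field_simps power2_eq_square)
  moreover have "(s + t) / (4 * R) \<le> 1"
    using assms by (simp add: field_simps)
  ultimately show ?thesis
    using \<open>s \<le> t\<close> mult_nonneg_nonneg[of "t - s" "1 - (s + t) / (4 * R)"] by linarith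
qed

lemma concave_gauge_nonneg: "R > 0 \<Longrightarrow> 0 \<le> t \<Longrightarrow> t \<le> 2 * R \<Longrightarrow> 0 \<le> concave_gauge R t"
  using concave_gauge_mono[of R 0 t] by (simp add: concave_gauge_def)

lemma concave_gauge_le: "R > 0 \<Longrightarrow> concave_gauge R t \<le> t"
  by (simp add: concave_gauge_def)

lemma has_real_derivative_concave_gauge_line:
  "R \<noteq> 0 \<Longrightarrow> ((\<lambda>s. concave_gauge R (r + s * c)) has_real_derivative (c - c * (r + s * c) / (2 * R))) (at s)"
  unfolding concave_gauge_def by (rule derivative_eq_intros refl | simp add: field_simps)+

definition doubling :: "(real^'d \<Rightarrow> real) \<Rightarrow> real \<Rightarrow> real \<Rightarrow> real^'d \<Rightarrow> real^'d \<Rightarrow> real" where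
  "doubling u L R x w = u x - u (x - w) - L * concave_gauge R (norm w)"

lemma doubling_le_at_reduced_point:
  fixes u :: "real^'d \<Rightarrow> real"
  assumes "periodic u" and "L \<ge> 0" and R: "sqrt CARD('d) \<le> R" and w: "norm w \<le> R"
  shows "\<exists>x' w'. x' \<in> cbox 0 (\<chi> i. 1) \<and> norm w' \<le> R / 2 \<and>
    doubling u L R x w \<le> doubling u L R x' w'"
proof -
  have "R > 0"
    using R one_le_sqrt_card[where 'a='d] by linarith
  obtain w' where w': "norm w' \<le> R / 2" "doubling u L R x w \<le> doubling u L R x w'"
  proof (cases "norm w \<le> R / 2")
    case False
    obtain z where z: "\<forall>i. z$i \<in> \<int>" "norm (w + z) \<le> sqrt CARD('d) / 2"
      using exists_Ints_vec_shift_norm_le by blast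
    have "u (x - (w + z)) = u (x - w)"
      using periodic_add_Ints_vec[OF \<open>periodic u\<close>, of "- z" "x - w"] z(1)
      by (simp add: algebra_simps)
    moreover have "concave_gauge R (norm (w + z)) \<le> concave_gauge R (norm w)"
      using False z(2) R w \<open>R > 0\<close> by (intro concave_gauge_mono) auto
    ultimately show thesis
      using that[of "w + z"] z(2) R \<open>L \<ge> 0\<close>
      by (simp add: doubling_def mult_left_mono)
  qed simp
  obtain v where v: "\<forall>i. v$i \<in> \<int>" "x + v \<in> cbox 0 (\<chi> i. 1)"
    using exists_Ints_vec_shift_unit_cube by blast
  have "u (x + v) = u x" and "u (x + v - w') = u (x - w')"
    using periodic_add_Ints_vec[OF \<open>periodic u\<close> v(1), of x]
      periodic_add_Ints_vec[OF \<open>periodic u\<close> v(1), of "x - w'"]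
    by (simp_all add: diff_add_eq)
  then have "doubling u L R (x + v) w' = doubling u L R x w'"
    by (simp add: doubling_def)
  with w' v(2) show ?thesis
    by (intro exI[of _ "x + v"] exI[of _ w']) simp
qed

lemma doubling_attains_max:
  fixes u :: "real^'d \<Rightarrow> real"
  assumes "periodic u" and "continuous_on UNIV u" and "L \<ge> 0" and R: "sqrt CARD('d) \<le> R"
  shows "\<exists>x0 w0. norm w0 \<le> R / 2 \<and>
    (\<forall>x w. norm w \<le> R \<longrightarrow> doubling u L R x w \<le> doubling u L R x0 w0)"
proof -
  let ?K = "cbox 0 (\<chi> i. 1) \<times> cball 0 (R / 2) :: ((real^'d) \<times> (real^'d)) set"
  have "R > 0"
    using R one_le_sqrt_card[where 'a='d] by linarith
  have "continuous_on ?K (\<lambda>p. doubling u L R (fst p) (snd p))"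
    unfolding doubling_def concave_gauge_def
    by (intro continuous_intros continuous_on_compose2[OF assms(2)]) (use \<open>R > 0\<close> in auto)
  moreover have "(0, 0) \<in> ?K"
    using \<open>R > 0\<close> by (simp add: mem_box_cart)
  ultimately obtain p0 where p0: "p0 \<in> ?K"
    and max: "\<forall>p\<in>?K. doubling u L R (fst p) (snd p) \<le> doubling u L R (fst p0) (snd p0)"
    using continuous_attains_sup[OF compact_Times[OF compact_cbox compact_cball]] by blast
  show ?thesis
  proof (intro exI conjI allI impI)
    show "norm (snd p0) \<le> R / 2"
      using p0 by (auto simp: mem_Times_iff)
    fix x w :: "real^'d"
    assume "norm w \<le> R"
    then obtain x' w' where "(x', w') \<in> ?K" and le: "doubling u L R x w \<le> doubling u L R x' w'"
      using doubling_le_at_reduced_point[OF \<open>periodic u\<close> \<open>L \<ge> 0\<close> R] by fastforce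
    from bspec[OF max this(1)] le show "doubling u L R x w \<le> doubling u L R (fst p0) (snd p0)"
      by simp
  qed
qed

lemma grad_eq_at_max_of_difference:
  fixes u :: "real^'d \<Rightarrow> real"
  assumes "\<And>y. u differentiable (at y)" and max: "\<And>x. u x - u (x - w) \<le> u x0 - u (x0 - w)"
  shows "grad u x0 = grad u (x0 - w)"
proof -
  have "pd i u x0 - pd i u (x0 - w) = 0" for i
  proof (rule DERIV_local_max[of _ _ 0 1])
    show "((\<lambda>s. u (x0 + s *\<^sub>R axis i 1) - u (x0 - w + s *\<^sub>R axis i 1))
        has_real_derivative pd i u x0 - pd i u (x0 - w)) (at 0)"
      using has_real_derivative_along_axis[of u x0 0 i] has_real_derivative_along_axis[of u "x0 - w" 0 i]
        assms(1) by (auto intro!: derivative_eq_intros)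
    show "\<forall>s. \<bar>0 - s\<bar> < 1 \<longrightarrow> u (x0 + s *\<^sub>R axis i 1) - u (x0 - w + s *\<^sub>R axis i 1)
        \<le> u (x0 + 0 *\<^sub>R axis i 1) - u (x0 - w + 0 *\<^sub>R axis i 1)"
      using max by (simp add: diff_add_eq)
  qed simp
  then show ?thesis
    by (simp add: grad_def vec_eq_iff)
qed

lemma doubling_max_along_reflected_line:
  fixes u :: "real^'d \<Rightarrow> real"
  assumes "R > 0" and "w0 \<noteq> 0" and w0: "norm w0 \<le> R / 2"
    and max: "\<And>x w. norm w \<le> R \<Longrightarrow> doubling u L R x w \<le> doubling u L R x0 w0"
    and s: "\<bar>s\<bar> < min (norm w0 / 2) (R / 4)"
  defines "e \<equiv> w0 /\<^sub>R norm w0"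
  shows "u (x0 + s *\<^sub>R axis k 1) - u (x0 - w0 + s *\<^sub>R (axis k 1 - (2 * e$k) *\<^sub>R e))
    - L * concave_gauge R (norm w0 + s * (2 * e$k)) \<le> doubling u L R x0 w0"
proof -
  define r where "r = norm w0"
  define c where "c = 2 * e$k"
  define w where "w = (r + s * c) *\<^sub>R e"
  have "norm e = 1" and w0_eq: "w0 = r *\<^sub>R e"
    using \<open>w0 \<noteq> 0\<close> by (auto simp: e_def r_def)
  have "\<bar>s * c\<bar> \<le> \<bar>s\<bar> * 2"
    using component_le_norm_cart[of e k] \<open>norm e = 1\<close> by (simp add: c_def abs_mult mult_left_mono)
  with s have sc: "\<bar>s * c\<bar> < r" "\<bar>s * c\<bar> \<le> R / 2"
    by (auto simp: r_def)
  have norm_w: "norm w = r + s * c"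
    using sc \<open>norm e = 1\<close> by (simp add: w_def)
  \<comment> \<open>Moving y = x0 - w0 along the reflection of axis k 1 in the hyperplane orthogonal to e
    changes the increment w0 only along e.\<close>
  have shift: "x0 - w0 + s *\<^sub>R (axis k 1 - c *\<^sub>R e) = (x0 + s *\<^sub>R axis k 1) - w"
    by (simp add: w_def w0_eq algebra_simps)
  have "doubling u L R (x0 + s *\<^sub>R axis k 1) w \<le> doubling u L R x0 w0"
    using max norm_w sc w0 by (simp add: r_def)
  then show ?thesis
    unfolding doubling_def r_def[symmetric] c_def[symmetric] by (simp only: norm_w shift)
qed

lemma doubling_max_second_order:
  fixes u :: "real^'d \<Rightarrow> real"
  assumes "C2 u" and "R > 0" and "w0 \<noteq> 0" and w0: "norm w0 \<le> R / 2"
    and max: "\<And>x w. norm w \<le> R \<Longrightarrow> doubling u L R x w \<le> doubling u L R x0 w0"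
  defines "e \<equiv> w0 /\<^sub>R norm w0"
  shows "pd k (pd k u) x0 - hessian_form u (x0 - w0) (axis k 1 - (2 * e$k) *\<^sub>R e)
    + 2 * L * (e$k)\<^sup>2 / R \<le> 0"
proof -
  define r where "r = norm w0"
  define c where "c = 2 * e$k"
  define \<eta> where "\<eta> = axis k 1 - c *\<^sub>R e"
  define h where "h s = u (x0 + s *\<^sub>R axis k 1) - u (x0 - w0 + s *\<^sub>R \<eta>) - L * concave_gauge R (r + s * c)"
    for s
  define h' where "h' s = pd k u (x0 + s *\<^sub>R axis k 1) - (\<Sum>i\<in>UNIV. \<eta>$i * pd i u (x0 - w0 + s *\<^sub>R \<eta>))
    - L * (c - c * (r + s * c) / (2 * R))" for s
  have du: "\<And>y. u differentiable (at y)" and dpd: "\<And>i y. pd i u differentiable (at y)"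
    using \<open>C2 u\<close> by (auto simp: C2_def)
  have "h' 0 = 0 \<and> pd k (pd k u) x0 - hessian_form u (x0 - w0) \<eta> - L * (- c * c / (2 * R)) \<le> 0"
  proof (rule local_max_second_derivative_test[where h=h and \<delta>="min (r / 2) (R / 4)"])
    show "(h has_real_derivative h' s) (at s)" for s
      unfolding h_def h'_def
      using has_real_derivative_along_axis[OF du, where x=x0 and s=s and k=k]
        has_real_derivative_along_line[OF du, where x="x0 - w0" and s=s and a=\<eta>]
        has_real_derivative_concave_gauge_line[where R=R and r=r and s=s and c=c] \<open>R > 0\<close>
      by (auto intro!: derivative_eq_intros)
    have "((\<lambda>s. c - c * (r + s * c) / (2 * R)) has_real_derivative - c * c / (2 * R)) (at 0)"
      using \<open>R > 0\<close> by (auto intro!: derivative_eq_intros)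
    from DERIV_diff[OF DERIV_diff[OF has_real_derivative_pd_along_axis[OF dpd, where k=k and x=x0]
        has_real_derivative_directional_pd[OF dpd, where x="x0 - w0" and a=\<eta>]] DERIV_cmult[OF this, of L]]
    show "(h' has_real_derivative pd k (pd k u) x0 - hessian_form u (x0 - w0) \<eta> - L * (- c * c / (2 * R))) (at 0)"
      unfolding h'_def by simp
    show "min (r / 2) (R / 4) > 0"
      using \<open>w0 \<noteq> 0\<close> \<open>R > 0\<close> by (simp add: r_def)
    show "h s \<le> h 0" if "\<bar>s\<bar> < min (r / 2) (R / 4)" for s
      using doubling_max_along_reflected_line[OF \<open>R > 0\<close> \<open>w0 \<noteq> 0\<close> w0 max, of s k] that
      by (simp add: h_def doubling_def r_def c_def \<eta>_def e_def)
  qed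
  then show ?thesis
    by (simp add: c_def \<eta>_def power2_eq_square field_simps)
qed

lemma hessian_form_reflection_sum:
  fixes e :: "real^'d"
  assumes "norm e = 1"
  shows "(\<Sum>k\<in>UNIV. hessian_form u y (axis k 1 - (2 * e$k) *\<^sub>R e)) = laplacian u y"
proof -
  let ?a = "\<lambda>k. axis k 1 - (2 * e$k) *\<^sub>R e"
  let ?H = "\<lambda>i j. pd j (pd i u) y"
  \<comment> \<open>The vectors ?a k are the columns of the orthogonal matrix I - 2 e e^T.\<close>
  have orth: "(\<Sum>k\<in>UNIV. ?a k $ i * ?a k $ j) = (if i = j then 1 else 0)" for i j
  proof -
    have "?a k $ i * ?a k $ j = axis k 1 $ i * axis k 1 $ j - 2 * e$j * (axis k 1 $ i * e$k)
        - 2 * e$i * (axis k 1 $ j * e$k) + 4 * e$i * e$j * (e$k)\<^sup>2" for k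
      by (simp add: algebra_simps power2_eq_square)
    then have "(\<Sum>k\<in>UNIV. ?a k $ i * ?a k $ j)
        = (\<Sum>k\<in>UNIV. axis k 1 $ i * axis k 1 $ j) - 2 * e$j * (\<Sum>k\<in>UNIV. axis k 1 $ i * e$k)
          - 2 * e$i * (\<Sum>k\<in>UNIV. axis k 1 $ j * e$k) + 4 * e$i * e$j * (\<Sum>k\<in>UNIV. (e$k)\<^sup>2)"
      by (simp only: sum.distrib sum_subtractf sum_distrib_left)
    also have "\<dots> = (if i = j then 1 else 0)"
      using assms by (simp add: sum_component_square axis_def if_distrib[of "\<lambda>c. c * _"] cong: if_cong)
    finally show ?thesis .
  qed
  have "(\<Sum>k\<in>UNIV. hessian_form u y (?a k))
      = (\<Sum>k\<in>UNIV. \<Sum>i\<in>UNIV. \<Sum>j\<in>UNIV. ?a k $ i * ?a k $ j * ?H i j)"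
    by (simp add: hessian_form_def sum_distrib_left mult.assoc)
  also have "\<dots> = (\<Sum>i\<in>UNIV. \<Sum>j\<in>UNIV. \<Sum>k\<in>UNIV. ?a k $ i * ?a k $ j * ?H i j)"
    by (subst sum.swap) (rule sum.cong[OF refl], rule sum.swap)
  also have "\<dots> = (\<Sum>i\<in>UNIV. \<Sum>j\<in>UNIV. (if i = j then 1 else 0) * ?H i j)"
    by (simp only: sum_distrib_right[symmetric] orth)
  also have "\<dots> = laplacian u y"
    by (simp add: laplacian_def if_distrib[of "\<lambda>c. c * _"] cong: if_cong)
  finally show ?thesis .
qed

lemma doubling_max_laplacian:
  fixes u :: "real^'d \<Rightarrow> real"
  assumes "C2 u" and "R > 0" and "w0 \<noteq> 0" and "norm w0 \<le> R / 2"
    and "\<And>x w. norm w \<le> R \<Longrightarrow> doubling u L R x w \<le> doubling u L R x0 w0"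
  shows "laplacian u x0 - laplacian u (x0 - w0) + 2 * L / R \<le> 0"
proof -
  define e where "e = w0 /\<^sub>R norm w0"
  have "norm e = 1"
    using \<open>w0 \<noteq> 0\<close> by (simp add: e_def)
  have "(\<Sum>k\<in>UNIV. pd k (pd k u) x0 - hessian_form u (x0 - w0) (axis k 1 - (2 * e$k) *\<^sub>R e)
      + 2 * L * (e$k)\<^sup>2 / R) \<le> 0"
    using doubling_max_second_order[OF assms] by (intro sum_nonpos) (simp add: e_def)
  moreover have "(\<Sum>k\<in>UNIV. 2 * L * (e$k)\<^sup>2 / R) = 2 * L / R"
    using \<open>norm e = 1\<close> by (simp add: sum_divide_distrib[symmetric] sum_distrib_left[symmetric]
        sum_component_square)
  ultimately show ?thesis
    using hessian_form_reflection_sum[OF \<open>norm e = 1\<close>, of u "x0 - w0"]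
    by (simp add: sum.distrib sum_subtractf laplacian_def)
qed

lemma HJ_doubling_max_nonpos:
  fixes u :: "real^'d \<Rightarrow> real"
  assumes "C2 u"
    and eq: "\<And>x. - laplacian u x + (1/2) * (norm (grad u x))\<^sup>2 + lam * u x = F x"
    and F: "\<And>x. \<bar>F x\<bar> \<le> S" and "lam \<ge> 0" and "R > 0" and "S * R < L"
    and w0: "norm w0 \<le> R / 2"
    and max: "\<And>x w. norm w \<le> R \<Longrightarrow> doubling u L R x w \<le> doubling u L R x0 w0"
  shows "doubling u L R x0 w0 \<le> 0"
proof (rule ccontr)
  assume pos: "\<not> doubling u L R x0 w0 \<le> 0"
  then have "w0 \<noteq> 0"
    by (auto simp: doubling_def concave_gauge_def)
  have "L \<ge> 0"
    using \<open>S * R < L\<close> F[of x0] mult_nonneg_nonneg[of S R] \<open>R > 0\<close> by linarith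
  have lap: "laplacian u x0 - laplacian u (x0 - w0) + 2 * L / R \<le> 0"
    using doubling_max_laplacian[OF \<open>C2 u\<close> \<open>R > 0\<close> \<open>w0 \<noteq> 0\<close> w0 max] .
  have "grad u x0 = grad u (x0 - w0)"
    using max[of w0] w0 \<open>R > 0\<close> \<open>C2 u\<close>
    by (intro grad_eq_at_max_of_difference) (auto simp: doubling_def C2_def)
  then have "laplacian u x0 - laplacian u (x0 - w0) = lam * (u x0 - u (x0 - w0)) - F x0 + F (x0 - w0)"
    using eq[of x0] eq[of "x0 - w0"] by (simp add: algebra_simps)
  moreover have "0 \<le> L * concave_gauge R (norm w0)"
    using concave_gauge_nonneg[of R "norm w0"] w0 \<open>R > 0\<close> \<open>L \<ge> 0\<close> by simp
  then have "u (x0 - w0) \<le> u x0"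
    using pos by (simp add: doubling_def)
  ultimately have "- 2 * S \<le> laplacian u x0 - laplacian u (x0 - w0)"
    using F[of x0] F[of "x0 - w0"] mult_nonneg_nonneg[OF \<open>lam \<ge> 0\<close>, of "u x0 - u (x0 - w0)"]
    unfolding abs_le_iff by linarith
  with lap have "2 * L / R \<le> 2 * S"
    by linarith
  then have "2 * L \<le> 2 * S * R"
    using pos_divide_le_eq[OF \<open>R > 0\<close>] by blast
  with \<open>S * R < L\<close> show False
    by linarith
qed

lemma HJ_increment_le_concave_gauge:
  fixes u :: "real^'d \<Rightarrow> real"
  assumes "C2 u" and "periodic u"
    and eq: "\<And>x. - laplacian u x + (1/2) * (norm (grad u x))\<^sup>2 + lam * u x = F x"
    and F: "\<And>x. \<bar>F x\<bar> \<le> S" and "lam \<ge> 0" and R: "sqrt CARD('d) \<le> R" and "S * R < L"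
    and "norm w \<le> R"
  shows "u x - u (x - w) \<le> L * concave_gauge R (norm w)"
proof -
  have "R > 0"
    using R one_le_sqrt_card[where 'a='d] by linarith
  then have "L \<ge> 0"
    using \<open>S * R < L\<close> F[of x] mult_nonneg_nonneg[of S R] by linarith
  obtain x0 w0 where w0: "norm w0 \<le> R / 2"
    and max: "\<And>x w. norm w \<le> R \<Longrightarrow> doubling u L R x w \<le> doubling u L R x0 w0"
    using doubling_attains_max[OF \<open>periodic u\<close> C2_continuous_on[OF \<open>C2 u\<close>] \<open>L \<ge> 0\<close> R] by blast
  then have "doubling u L R x0 w0 \<le> 0"
    using HJ_doubling_max_nonpos[OF \<open>C2 u\<close> eq F \<open>lam \<ge> 0\<close> \<open>R > 0\<close> \<open>S * R < L\<close>] by blast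
  then show ?thesis
    using max[OF \<open>norm w \<le> R\<close>, of x] by (simp add: doubling_def)
qed

lemma grad_norm_le_of_increment_le:
  fixes u :: "real^'d \<Rightarrow> real"
  assumes "u differentiable (at x)" and "\<rho> > 0" and "L \<ge> 0"
    and incr: "\<And>w. norm w \<le> \<rho> \<Longrightarrow> u (x + w) - u x \<le> L * norm w"
  shows "norm (grad u x) \<le> L"
proof (rule ccontr)
  assume "\<not> norm (grad u x) \<le> L"
  define n where "n = norm (grad u x)"
  define v where "v = grad u x /\<^sub>R n"
  have "n > L" and "n > 0"
    using \<open>\<not> norm (grad u x) \<le> L\<close> \<open>L \<ge> 0\<close> by (auto simp: n_def)
  have "norm v = 1"
    using \<open>n > 0\<close> by (simp add: v_def n_def)
  have "(\<Sum>i\<in>UNIV. v$i * pd i u x) = (\<Sum>i\<in>UNIV. (pd i u x)\<^sup>2) / n"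
    unfolding sum_divide_distrib by (rule sum.cong) (simp_all add: v_def grad_def power2_eq_square field_simps)
  also have "(\<Sum>i\<in>UNIV. (pd i u x)\<^sup>2) = n\<^sup>2"
    using sum_component_square[of "grad u x"] by (simp add: n_def grad_def)
  also have "n\<^sup>2 / n = n"
    using \<open>n > 0\<close> by (simp add: power2_eq_square)
  finally have "((\<lambda>t. u (x + t *\<^sub>R v)) has_real_derivative n) (at 0)"
    using has_real_derivative_along_line[of u x 0 v] assms(1) by simp
  from DERIV_diff[OF this DERIV_cmult[OF DERIV_ident, of L]] \<open>n > L\<close>
  obtain d where "d > 0" and inc: "\<And>h. 0 < h \<Longrightarrow> h < d \<Longrightarrow> u x < u (x + h *\<^sub>R v) - L * h"
    using DERIV_pos_inc_right[of "\<lambda>t. u (x + t *\<^sub>R v) - L * t" "n - L" 0] by force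
  define h where "h = min (d / 2) \<rho>"
  have "0 < h" "h < d" "h \<le> \<rho>"
    using \<open>d > 0\<close> \<open>\<rho> > 0\<close> by (auto simp: h_def)
  then have "u (x + h *\<^sub>R v) - u x \<le> L * h"
    using incr[of "h *\<^sub>R v"] \<open>norm v = 1\<close> by simp
  with inc[OF \<open>0 < h\<close> \<open>h < d\<close>] show False
    by simp
qed

lemma HJ_grad_norm_le:
  fixes u :: "real^'d \<Rightarrow> real"
  assumes "C2 u" and "periodic u"
    and eq: "\<And>x. - laplacian u x + (1/2) * (norm (grad u x))\<^sup>2 + lam * u x = F x"
    and F: "\<And>x. \<bar>F x\<bar> \<le> S" and "lam \<ge> 0" and L: "S * sqrt CARD('d) < L"
  shows "norm (grad u x) \<le> L"
proof (rule grad_norm_le_of_increment_le)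
  show "u differentiable (at x)"
    using \<open>C2 u\<close> by (simp add: C2_def)
  show "sqrt CARD('d) > 0"
    using one_le_sqrt_card[where 'a='d] by linarith
  have "S \<ge> 0"
    using F[of x] by linarith
  then show "L \<ge> 0"
    using L mult_nonneg_nonneg[OF _ real_sqrt_ge_zero[OF of_nat_0_le_iff], of S "CARD('d)"] by linarith
  fix w :: "real^'d"
  assume "norm w \<le> sqrt CARD('d)"
  then have "u (x + w) - u ((x + w) - w) \<le> L * concave_gauge (sqrt CARD('d)) (norm w)"
    by (intro HJ_increment_le_concave_gauge[OF assms(1-5) order.refl L])
  also have "\<dots> \<le> L * norm w"
    using \<open>L \<ge> 0\<close> concave_gauge_le[of "sqrt CARD('d)" "norm w"] one_le_sqrt_card[where 'a='d]
    by (simp add: mult_left_mono)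
  finally show "u (x + w) - u x \<le> L * norm w"
    by simp
qed

section \<open>The Fokker-Planck equation\<close>

lemma pd_mult_pd:
  fixes m u :: "real^'d \<Rightarrow> real"
  assumes "m differentiable (at x)" and "pd i u differentiable (at x)"
  shows "pd i (\<lambda>y. m y * pd i u y) x = pd i m x * pd i u x + m x * pd i (pd i u) x"
proof -
  have "((\<lambda>t. m (x + t *\<^sub>R axis i 1) * pd i u (x + t *\<^sub>R axis i 1)) has_real_derivative
      pd i m x * pd i u x + m x * pd i (pd i u) x) (at 0)"
    using DERIV_mult[OF has_real_derivative_along_axis has_real_derivative_along_axis, of m x 0 i "pd i u"]
      assms by (simp add: mult.commute)
  then show ?thesis
    unfolding pd_def[of i "\<lambda>y. m y * pd i u y"] by (rule DERIV_imp_deriv)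
qed

lemma div_mgrad_eq:
  fixes m u :: "real^'d \<Rightarrow> real"
  assumes "C2 m" and "C2 u"
  shows "div_mgrad m u x = (\<Sum>i\<in>UNIV. pd i m x * pd i u x) + m x * laplacian u x"
  using assms unfolding C2_def
  by (simp add: div_mgrad_def laplacian_def pd_mult_pd sum.distrib sum_distrib_left)

lemma FP_global_max_le:
  fixes m u m0 :: "real^'d \<Rightarrow> real"
  assumes "C2 m" and "C2 u"
    and eq: "\<And>x. - laplacian m x - div_mgrad m u x + lam * m x = lam * m0 x"
    and M: "\<And>x. \<bar>laplacian u x\<bar> \<le> M" and "M < lam" and N: "\<And>x. \<bar>m0 x\<bar> \<le> N"
    and a: "\<And>y. m y \<le> m a"
  shows "m a \<le> lam / (lam - M) * N"
proof (cases "m a \<ge> 0")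
  case True
  have "0 \<le> M"
    using M[of a] by linarith
  have "lam * m a \<le> lam * m0 a + m a * laplacian u a"
    using eq[of a] C2_global_max[OF \<open>C2 m\<close> a] div_mgrad_eq[OF \<open>C2 m\<close> \<open>C2 u\<close>, of a]
    by (simp add: grad_def vec_eq_iff)
  moreover have "m a * laplacian u a \<le> m a * M" and "lam * m0 a \<le> lam * N"
    using True M[of a] N[of a] \<open>M < lam\<close> \<open>0 \<le> M\<close> by (auto intro!: mult_left_mono)
  ultimately have "m a * (lam - M) \<le> lam * N"
    by (simp add: algebra_simps)
  then show ?thesis
    using \<open>M < lam\<close> by (simp add: pos_le_divide_eq)
next
  case False
  have "0 \<le> M" "0 \<le> N"
    using M[of a] N[of a] by linarith+
  then have "0 \<le> lam / (lam - M) * N"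
    using \<open>M < lam\<close> by simp
  with False show ?thesis
    by linarith
qed

lemma FP_global_min_ge:
  fixes m u m0 :: "real^'d \<Rightarrow> real"
  assumes "C2 m" and "C2 u"
    and eq: "\<And>x. - laplacian m x - div_mgrad m u x + lam * m x = lam * m0 x"
    and M: "\<And>x. \<bar>laplacian u x\<bar> \<le> M" and "M < lam" and N: "\<And>x. \<bar>m0 x\<bar> \<le> N"
    and b: "\<And>y. m b \<le> m y"
  shows "- (lam / (lam - M) * N) \<le> m b"
proof (cases "m b \<le> 0")
  case True
  have "0 \<le> M"
    using M[of b] by linarith
  have "lam * m0 b + m b * laplacian u b \<le> lam * m b"
    using eq[of b] C2_global_min[OF \<open>C2 m\<close> b] div_mgrad_eq[OF \<open>C2 m\<close> \<open>C2 u\<close>, of b]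
    by (simp add: grad_def vec_eq_iff)
  moreover have "m b * M \<le> m b * laplacian u b"
    using True M[of b] by (intro mult_left_mono_neg) (auto simp: abs_le_iff)
  moreover have "lam * (- N) \<le> lam * m0 b"
    using N[of b] \<open>M < lam\<close> \<open>0 \<le> M\<close> by (intro mult_left_mono) (auto simp: abs_le_iff)
  ultimately have "- (lam * N) \<le> m b * (lam - M)"
    by (simp add: algebra_simps)
  moreover have "0 < lam - M"
    using \<open>M < lam\<close> by simp
  ultimately have "- (lam * N) / (lam - M) \<le> m b"
    using pos_divide_le_eq by blast
  then show ?thesis
    by simp
next
  case False
  have "0 \<le> M" "0 \<le> N"
    using M[of b] N[of b] by linarith+
  then have "0 \<le> lam / (lam - M) * N"
    using \<open>M < lam\<close> by simp
  with False show ?thesis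
    by linarith
qed

lemma FP_solution_abs_le:
  fixes m u m0 :: "real^'d \<Rightarrow> real"
  assumes "C2 m" and "C2 u" and "periodic m"
    and eq: "\<And>x. - laplacian m x - div_mgrad m u x + lam * m x = lam * m0 x"
    and M: "\<And>x. \<bar>laplacian u x\<bar> \<le> M" and "M < lam" and N: "\<And>x. \<bar>m0 x\<bar> \<le> N"
  shows "\<bar>m x\<bar> \<le> lam / (lam - M) * N"
proof -
  obtain a where a: "\<And>y. m y \<le> m a"
    using periodic_continuous_attains_max[OF \<open>periodic m\<close> C2_continuous_on[OF \<open>C2 m\<close>]] by blast
  obtain b where b: "\<And>y. m b \<le> m y"
    using periodic_continuous_attains_min[OF \<open>periodic m\<close> C2_continuous_on[OF \<open>C2 m\<close>]] by blast
  show ?thesis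
    using FP_global_max_le[OF assms(1,2) eq M \<open>M < lam\<close> N a] a[of x]
      FP_global_min_ge[OF assms(1,2) eq M \<open>M < lam\<close> N b] b[of x]
    by (simp add: abs_le_iff)
qed

section \<open>Sup-norm estimates\<close>

lemma abs_le_supnorm: "bounded (range g) \<Longrightarrow> \<bar>g x\<bar> \<le> supnorm (g :: 'a \<Rightarrow> real)"
  unfolding supnorm_def bounded_iff
  by (intro cSUP_upper) (auto intro: bdd_aboveI2)

lemma supnorm_le: "(\<And>x. \<bar>g x\<bar> \<le> C) \<Longrightarrow> supnorm g \<le> C"
  unfolding supnorm_def by (intro cSUP_least) auto

lemma supnorm_vec_le: "(\<And>x. norm (v x) \<le> C) \<Longrightarrow> supnorm_vec v \<le> C"
  unfolding supnorm_vec_def by (intro cSUP_least) auto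

lemma MFG_classical_solution_bounds:
  fixes u m m0 :: "real^'d \<Rightarrow> real"
  assumes sol: "MFG_classical_solution lam f m0 u m" and "lam > 0"
    and f: "\<And>t. \<bar>f t\<bar> \<le> S" and L: "S * sqrt CARD('d) < L"
  defines "M \<equiv> 2 * S + L\<^sup>2 / 2"
  shows "\<bar>u x\<bar> \<le> S / lam" and "norm (grad u x) \<le> L" and "\<bar>laplacian u x\<bar> \<le> M"
    and "\<lbrakk>M < lam; \<And>y. \<bar>m0 y\<bar> \<le> N\<rbrakk> \<Longrightarrow> \<bar>m x\<bar> \<le> lam / (lam - M) * N"
proof -
  have "periodic u" "periodic m" "C2 u" "C2 m"
    and HJ: "\<And>x. - laplacian u x + (1/2) * (norm (grad u x))\<^sup>2 + lam * u x = f (m x)"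
    and FP: "\<And>x. - laplacian m x - div_mgrad m u x + lam * m x = lam * m0 x"
    using sol by (simp_all add: MFG_classical_solution_def)
  have u: "\<bar>u y\<bar> \<le> S / lam" for y
    using HJ_solution_abs_le[OF \<open>C2 u\<close> \<open>periodic u\<close> HJ f \<open>lam > 0\<close>] .
  have grad: "norm (grad u y) \<le> L" for y
    using HJ_grad_norm_le[OF \<open>C2 u\<close> \<open>periodic u\<close> HJ f _ L] \<open>lam > 0\<close> by simp
  have lap: "\<bar>laplacian u y\<bar> \<le> M" for y
  proof -
    have "\<bar>lam * u y\<bar> \<le> S"
      using u[of y] \<open>lam > 0\<close> by (simp add: abs_mult field_simps)
    moreover have "(norm (grad u y))\<^sup>2 \<le> L\<^sup>2"
      using grad[of y] by (simp add: power_mono)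
    ultimately show ?thesis
      using HJ[of y] f[of "m y"] zero_le_power2[of "norm (grad u y)"]
      unfolding M_def abs_le_iff by linarith
  qed
  show "\<bar>u x\<bar> \<le> S / lam" "norm (grad u x) \<le> L" "\<bar>laplacian u x\<bar> \<le> M"
    using u grad lap by blast+
  show "\<bar>m x\<bar> \<le> lam / (lam - M) * N" if "M < lam" and "\<And>y. \<bar>m0 y\<bar> \<le> N"
    using FP_solution_abs_le[OF \<open>C2 m\<close> \<open>C2 u\<close> \<open>periodic m\<close> FP lap that] .
qed

theorem proposition2p4:
  shows "\<exists>K :: real \<Rightarrow> real. (\<forall>s. K s > 0) \<and>
    (\<forall>(f :: real \<Rightarrow> real) (lam::real) (\<alpha>::real) (m0 :: real^'d \<Rightarrow> real) u m.
       continuous_on UNIV f \<and> bounded (range f) \<and>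
       lam > 0 \<and> 0 < \<alpha> \<and> \<alpha> < 1 \<and> periodic m0 \<and> holder \<alpha> m0 \<and> prob_density m0 \<and>
       MFG_classical_solution lam f m0 u m \<longrightarrow>
       (let M = 2 * supnorm f + (K (supnorm f))\<^sup>2 / 2 in
         supnorm u \<le> supnorm f / lam \<and>
         supnorm_vec (grad u) \<le> K (supnorm f) \<and>
         supnorm (laplacian u) \<le> M \<and>
         (lam > M \<longrightarrow> supnorm m \<le> lam / (lam - M) * supnorm m0)))"
proof (intro exI[of _ "\<lambda>s. \<bar>s\<bar> * sqrt CARD('d) + 1"] conjI allI impI)
  \<comment> \<open>The absolute value only makes K positive at negative arguments; supnorm f is nonnegative.\<close>
  fix f :: "real \<Rightarrow> real" and lam \<alpha> :: real and m0 u m :: "real^'d \<Rightarrow> real"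
  assume H: "continuous_on UNIV f \<and> bounded (range f) \<and>
       lam > 0 \<and> 0 < \<alpha> \<and> \<alpha> < 1 \<and> periodic m0 \<and> holder \<alpha> m0 \<and> prob_density m0 \<and>
       MFG_classical_solution lam f m0 u m"
  have f: "\<And>t. \<bar>f t\<bar> \<le> supnorm f"
    using H by (blast intro: abs_le_supnorm)
  have "bounded (range m0)"
    using H holder_bounded_image[of \<alpha> m0 "cbox 0 (\<chi> i. 1)"] periodic_range[of m0]
    by (metis bounded_cbox less_imp_le)
  then have m0: "\<And>y. \<bar>m0 y\<bar> \<le> supnorm m0"
    by (rule abs_le_supnorm)
  have "\<bar>supnorm f\<bar> = supnorm f"
    using f[of 0] by linarith
  then have L: "supnorm f * sqrt CARD('d) < \<bar>supnorm f\<bar> * sqrt CARD('d) + 1"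
    by simp
  note bounds = MFG_classical_solution_bounds[OF _ _ f L]
  show "let M = 2 * supnorm f + (\<bar>supnorm f\<bar> * sqrt CARD('d) + 1)\<^sup>2 / 2 in
      supnorm u \<le> supnorm f / lam \<and>
      supnorm_vec (grad u) \<le> \<bar>supnorm f\<bar> * sqrt CARD('d) + 1 \<and>
      supnorm (laplacian u) \<le> M \<and>
      (lam > M \<longrightarrow> supnorm m \<le> lam / (lam - M) * supnorm m0)"
    unfolding Let_def using H m0
    by (intro conjI impI supnorm_le supnorm_vec_le bounds) auto
qed (simp add: add_nonneg_pos)

end
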